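(* Let $T$ be a tree of order $n$ with $\operatorname{diam}(T)\geq 4$, and let $T_1$ be a tree obtained from $T$ by a proper generalized tree shift. Then $\lambda_1(\overline{T_1})> \lambda_1(\overline{T})$, where $\lambda_1(G)$ denotes the distance spectral radius of $G$ and $\overline{G}$ denotes the complement of $G$.
   Context: For a connected graph $G$, the distance matrix $D(G)$ has $(v_i,v_j)$-entry equal to the length of a shortest path between $v_i$ and $v_j$ in $G$; its largest eigenvalue is the distance spectral radius $\lambda_1(G)$. The complement $\overline{G}$ has the same vertex set as $G$, with two distinct vertices adjacent iff they are non-adjacent in $G$. Generalized tree shift (GTS): let $T$ be a tree and $u,v\in V(T)$ such that all interior vertices of the path $uPv$ from $u$ to $v$ in $T$ (if any) have degree $2$. Let $w$ be the neighbor of $v$ on the path $uPv$ (possibly $w=u$). The tree $T_1$ is obtained from $T$ by deleting all edges between $v$ and $N_T(v)\setminus\{w\}$ and adding all edges between $u$ and $N_T(v)\setminus\{w\}$ (here $N_T(v)$ is the set of neighbours of $v$ in $T$). The GTS is called proper if neither $u$ nor $v$ is a pendant vertex (degree-one vertex) of $T$; in that case $T_1$ has one more pendant vertex than $T$. *)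

theory Defs
  imports "Jordan_Normal_Form.Char_Poly"
begin

definition graph :: "nat \<Rightarrow> nat set set \<Rightarrow> bool" where
  "graph n E \<longleftrightarrow> (\<forall>e\<in>E. \<exists>x y. e = {x, y} \<and> x \<noteq> y \<and> x < n \<and> y < n)"

definition nbrs :: "nat set set \<Rightarrow> nat \<Rightarrow> nat set" where
  "nbrs E x = {y. {x, y} \<in> E}"

definition deg :: "nat set set \<Rightarrow> nat \<Rightarrow> nat" where
  "deg E x = card (nbrs E x)"

definition pendant :: "nat set set \<Rightarrow> nat \<Rightarrow> bool" where
  "pendant E x \<longleftrightarrow> deg E x = 1"

definition walk :: "nat set set \<Rightarrow> nat list \<Rightarrow> bool" where
  "walk E xs \<longleftrightarrow> xs \<noteq> [] \<and> (\<forall>i. Suc i < length xs \<longrightarrow> {xs ! i, xs ! Suc i} \<in> E)"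

definition path :: "nat set set \<Rightarrow> nat list \<Rightarrow> bool" where
  "path E xs \<longleftrightarrow> walk E xs \<and> distinct xs"

definition connected :: "nat \<Rightarrow> nat set set \<Rightarrow> bool" where
  "connected n E \<longleftrightarrow> (\<forall>x<n. \<forall>y<n. \<exists>xs. walk E xs \<and> hd xs = x \<and> last xs = y)"

(* a cycle: closed walk x0 x1 ... x(k-1) x0 with k >= 3 distinct vertices *)
definition has_cycle :: "nat set set \<Rightarrow> bool" where
  "has_cycle E \<longleftrightarrow> (\<exists>xs. walk E xs \<and> length xs \<ge> 4 \<and> hd xs = last xs \<and> distinct (tl xs))"

definition is_tree :: "nat \<Rightarrow> nat set set \<Rightarrow> bool" where
  "is_tree n E \<longleftrightarrow> graph n E \<and> connected n E \<and> \<not> has_cycle E"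

definition gdist :: "nat set set \<Rightarrow> nat \<Rightarrow> nat \<Rightarrow> nat" where
  "gdist E x y = (LEAST k. \<exists>xs. walk E xs \<and> hd xs = x \<and> last xs = y \<and> length xs = Suc k)"

definition diam :: "nat \<Rightarrow> nat set set \<Rightarrow> nat" where
  "diam n E = Max {gdist E x y | x y. x < n \<and> y < n}"

definition complement :: "nat \<Rightarrow> nat set set \<Rightarrow> nat set set" where
  "complement n E = {{x, y} | x y. x < n \<and> y < n \<and> x \<noteq> y \<and> {x, y} \<notin> E}"

definition distance_matrix :: "nat \<Rightarrow> nat set set \<Rightarrow> real mat" where
  "distance_matrix n E = mat n n (\<lambda>(i, j). real (gdist E i j))"

definition dist_spectral_radius :: "nat \<Rightarrow> nat set set \<Rightarrow> real" where
  "dist_spectral_radius n E = Max {k. eigenvalue (distance_matrix n E) k}"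

definition gts :: "nat \<Rightarrow> nat set set \<Rightarrow> nat \<Rightarrow> nat \<Rightarrow> nat set set \<Rightarrow> bool" where
  "gts n E u v E1 \<longleftrightarrow> u < n \<and> v < n \<and> u \<noteq> v \<and>
     (\<exists>p. path E p \<and> hd p = u \<and> last p = v \<and>
        (\<forall>i. 0 < i \<and> i < length p - 1 \<longrightarrow> deg E (p ! i) = 2) \<and>
        (let w = p ! (length p - 2); S = nbrs E v - {w} in
           E1 = (E - {{v, x} | x. x \<in> S}) \<union> {{u, x} | x. x \<in> S}))"

definition proper_gts :: "nat \<Rightarrow> nat set set \<Rightarrow> nat \<Rightarrow> nat \<Rightarrow> nat set set \<Rightarrow> bool" where
  "proper_gts n E u v E1 \<longleftrightarrow> gts n E u v E1 \<and> \<not> pendant E u \<and> \<not> pendant E v"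

end

theory Submission
  imports Defs "HOL-Analysis.Function_Topology"
begin

(* Since diam T >= 4, every edge of T has a vertex adjacent to neither of its ends, so the
   complement of T has diameter 2 and its distance matrix is J - I + A(T).  In T1 the vertex v is
   pendant, which keeps the complement of T1 connected, so its distance matrix dominates
   J - I + A(T1) = J - I + A(T) + A(u, S) - A(v, S) entrywise, where S = N(v) - {w} and A(a, X)
   is the adjacency matrix of the star joining a to X.
   Let x be the positive Perron vector of J - I + A(T).  If x u >= x v, the Rayleigh quotient at
   x does not drop and the u-th entry of the matrix-vector product strictly grows, so x cannot be
   a Perron vector of the complement of T1 with the same eigenvalue.  If x u < x v, use that T1
   is isomorphic, by reversing the path from u to v, to the tree obtained by moving
   R = N(u) - {next vertex on the path} from u to v; for that tree the Rayleigh quotient at x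
   strictly increases. *)

section \<open>Rayleigh quotients of symmetric matrices\<close>

definition quad_form :: "nat \<Rightarrow> (nat \<Rightarrow> nat \<Rightarrow> real) \<Rightarrow> (nat \<Rightarrow> real) \<Rightarrow> real" where
  "quad_form n f x = (\<Sum>i<n. \<Sum>j<n. f i j * x i * x j)"

definition sq_norm :: "nat \<Rightarrow> (nat \<Rightarrow> real) \<Rightarrow> real" where
  "sq_norm n x = (\<Sum>i<n. (x i)\<^sup>2)"

definition symmetric_on :: "nat \<Rightarrow> (nat \<Rightarrow> nat \<Rightarrow> real) \<Rightarrow> bool" where
  "symmetric_on n f \<longleftrightarrow> (\<forall>i<n. \<forall>j<n. f i j = f j i)"

definition rayleigh_maximizer :: "nat \<Rightarrow> (nat \<Rightarrow> nat \<Rightarrow> real) \<Rightarrow> (nat \<Rightarrow> real) \<Rightarrow> bool" where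
  "rayleigh_maximizer n f z \<longleftrightarrow>
     sq_norm n z = 1 \<and> (\<forall>x. sq_norm n x = 1 \<longrightarrow> quad_form n f x \<le> quad_form n f z)"

definition max_eigenvalue :: "nat \<Rightarrow> (nat \<Rightarrow> nat \<Rightarrow> real) \<Rightarrow> real" where
  "max_eigenvalue n f = Max {k. eigenvalue (mat n n (case_prod f)) k}"

lemma quad_form_eq_sum_rows: "quad_form n f x = (\<Sum>i<n. x i * (\<Sum>j<n. f i j * x j))"
  unfolding quad_form_def by (simp add: sum_distrib_left algebra_simps)

lemma quad_form_mono:
  assumes "\<And>i. i < n \<Longrightarrow> 0 \<le> x i" and "\<And>i j. i < n \<Longrightarrow> j < n \<Longrightarrow> f i j \<le> g i j"
  shows "quad_form n f x \<le> quad_form n g x"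
  unfolding quad_form_def using assms by (intro sum_mono) (auto intro!: mult_right_mono)

lemma quad_form_add_diff:
  "quad_form n (\<lambda>i j. f i j + g i j - h i j) x = quad_form n f x + quad_form n g x - quad_form n h x"
  unfolding quad_form_def by (simp add: sum.distrib sum_subtractf algebra_simps)

lemma quad_form_scale: "quad_form n f (\<lambda>i. c * x i) = c\<^sup>2 * quad_form n f x"
  unfolding quad_form_def by (simp add: sum_distrib_left power2_eq_square algebra_simps)

lemma sq_norm_scale: "sq_norm n (\<lambda>i. c * x i) = c\<^sup>2 * sq_norm n x"
  unfolding sq_norm_def by (simp add: sum_distrib_left power2_eq_square algebra_simps)

lemma sq_norm_nonneg: "0 \<le> sq_norm n x"
  unfolding sq_norm_def by (simp add: sum_nonneg)

lemma sq_norm_eq_0_iff: "sq_norm n x = 0 \<longleftrightarrow> (\<forall>i<n. x i = 0)"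
  unfolding sq_norm_def by (subst sum_nonneg_eq_0_iff) auto

lemma quad_form_abs_ge:
  assumes "\<And>i j. i < n \<Longrightarrow> j < n \<Longrightarrow> 0 \<le> f i j"
  shows "quad_form n f x \<le> quad_form n f (\<lambda>i. \<bar>x i\<bar>)"
  unfolding quad_form_def
proof (intro sum_mono)
  fix i j assume "i \<in> {..<n}" "j \<in> {..<n}"
  then have "0 \<le> f i j" using assms by simp
  moreover have "x i * x j \<le> \<bar>x i\<bar> * \<bar>x j\<bar>" by (metis abs_ge_self abs_mult)
  ultimately show "f i j * x i * x j \<le> f i j * \<bar>x i\<bar> * \<bar>x j\<bar>"
    by (metis mult.assoc mult_left_mono)
qed

lemma quad_form_expand:
  assumes "symmetric_on n f"
  shows "quad_form n f (\<lambda>i. z i + t * h i) =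
    quad_form n f z + 2 * t * (\<Sum>i<n. h i * (\<Sum>j<n. f i j * z j)) + t\<^sup>2 * quad_form n f h"
proof -
  define A where "A = (\<Sum>i<n. \<Sum>j<n. f i j * h i * z j)"
  have "quad_form n f (\<lambda>i. z i + t * h i) = quad_form n f z + t * A
      + t * (\<Sum>i<n. \<Sum>j<n. f i j * z i * h j) + t\<^sup>2 * quad_form n f h"
    unfolding quad_form_def A_def
    by (simp add: sum.distrib sum_distrib_left algebra_simps power2_eq_square)
  also have "(\<Sum>i<n. \<Sum>j<n. f i j * z i * h j) = A"
    unfolding A_def
    by (subst sum.swap) (use assms in \<open>auto simp: symmetric_on_def algebra_simps intro!: sum.cong\<close>)
  also have "A = (\<Sum>i<n. h i * (\<Sum>j<n. f i j * z j))"
    unfolding A_def by (simp add: sum_distrib_left algebra_simps)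
  finally show ?thesis by simp
qed

lemma sq_norm_expand:
  "sq_norm n (\<lambda>i. z i + t * h i) = sq_norm n z + 2 * t * (\<Sum>i<n. h i * z i) + t\<^sup>2 * sq_norm n h"
  unfolding sq_norm_def by (simp add: sum.distrib sum_distrib_left algebra_simps power2_eq_square)

lemma quad_form_reindex:
  assumes "bij_betw \<sigma> {..<n} {..<n}"
  shows "quad_form n (\<lambda>i j. f (\<sigma> i) (\<sigma> j)) (\<lambda>i. x (\<sigma> i)) = quad_form n f x"
  unfolding quad_form_def
  using sum.reindex_bij_betw[OF assms, of "\<lambda>i. \<Sum>j<n. f i j * x i * x j"]
    sum.reindex_bij_betw[OF assms, of "\<lambda>j. f _ j * x _ * x j"]
  by simp

lemma sq_norm_reindex:
  assumes "bij_betw \<sigma> {..<n} {..<n}"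
  shows "sq_norm n (\<lambda>i. x (\<sigma> i)) = sq_norm n x"
  unfolding sq_norm_def using sum.reindex_bij_betw[OF assms, of "\<lambda>i. (x i)\<^sup>2"] by simp

lemma continuous_map_sq_norm:
  "continuous_map (powertop_real {..<n}) euclideanreal (sq_norm n)"
  unfolding sq_norm_def
  by (intro continuous_map_sum continuous_map_real_pow) (auto intro: continuous_map_product_projection)

lemma continuous_map_quad_form:
  "continuous_map (powertop_real {..<n}) euclideanreal (quad_form n f)"
  unfolding quad_form_def
  by (intro continuous_map_sum continuous_map_real_mult) (auto intro: continuous_map_product_projection)

lemma compactin_unit_sphere:
  "compactin (powertop_real {..<n}) {x \<in> topspace (powertop_real {..<n}). sq_norm n x = 1}"
proof -
  have "x i \<in> {-1..1}" if "sq_norm n x = 1" "i < n" for x i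
  proof -
    have "(x i)\<^sup>2 \<le> sq_norm n x"
      unfolding sq_norm_def using that(2) by (intro member_le_sum) auto
    then show ?thesis using that(1) abs_square_le_1[of "x i"] by auto
  qed
  then have "{x \<in> topspace (powertop_real {..<n}). sq_norm n x = 1} \<subseteq> PiE {..<n} (\<lambda>_. {-1..1})"
    by (auto simp: PiE_iff extensional_def)
  moreover have "compactin (powertop_real {..<n}) (PiE {..<n} (\<lambda>_. {-1..1}))"
    by (simp add: compactin_PiE)
  moreover have "closedin (powertop_real {..<n}) {x \<in> topspace (powertop_real {..<n}). sq_norm n x = 1}"
    using closedin_continuous_map_preimage[OF continuous_map_sq_norm, of "{1}"] by simp
  ultimately show ?thesis using closed_compactin by blast
qed

lemma rayleigh_maximizer_exists:
  assumes "0 < n"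
  shows "\<exists>z. rayleigh_maximizer n f z"
proof -
  let ?K = "{x \<in> topspace (powertop_real {..<n}). sq_norm n x = 1}"
  have compact: "compact (quad_form n f ` ?K)"
    using image_compactin[OF compactin_unit_sphere continuous_map_quad_form] by simp
  define e where "e = (\<lambda>i::nat. if i = 0 then (1::real) else 0)"
  have "sq_norm n e = (\<Sum>i<n. if i = 0 then 1 else 0)"
    unfolding sq_norm_def by (intro sum.cong) (auto simp: e_def)
  also have "\<dots> = 1" using assms by simp
  finally have "restrict e {..<n} \<in> ?K"
    by (auto simp: sq_norm_def PiE_iff)
  then obtain z where z: "z \<in> ?K" and z_max: "\<And>y. y \<in> ?K \<Longrightarrow> quad_form n f y \<le> quad_form n f z"
    using compact_attains_sup[OF compact] by blast
  have "quad_form n f x \<le> quad_form n f z" if "sq_norm n x = 1" for x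
  proof -
    have "quad_form n f (restrict x {..<n}) = quad_form n f x"
      "sq_norm n (restrict x {..<n}) = sq_norm n x"
      unfolding quad_form_def sq_norm_def by (auto intro!: sum.cong)
    then show ?thesis using z_max[of "restrict x {..<n}"] that by (auto simp: PiE_iff)
  qed
  then show ?thesis using z unfolding rayleigh_maximizer_def by auto
qed

lemma rayleigh_maximizer_bound:
  assumes "rayleigh_maximizer n f z"
  shows "quad_form n f y \<le> quad_form n f z * sq_norm n y"
proof (cases "sq_norm n y = 0")
  case True
  then have "quad_form n f y = 0" by (simp add: quad_form_def sq_norm_eq_0_iff)
  with True show ?thesis by simp
next
  case False
  then have pos: "0 < sq_norm n y" using sq_norm_nonneg[of n y] by simp
  define c where "c = 1 / sqrt (sq_norm n y)"
  have c2: "c\<^sup>2 = 1 / sq_norm n y" using pos by (simp add: c_def power_divide)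
  have "sq_norm n (\<lambda>i. c * y i) = 1" using c2 pos by (simp add: sq_norm_scale)
  then have "quad_form n f (\<lambda>i. c * y i) \<le> quad_form n f z"
    using assms unfolding rayleigh_maximizer_def by blast
  then show ?thesis using c2 pos by (simp add: quad_form_scale field_simps)
qed

lemma linear_coeff_eq_0_if_quadratic_nonpos:
  fixes a b :: real
  assumes "\<And>t. 2 * t * a + t\<^sup>2 * b \<le> 0"
  shows "a = 0"
proof (rule ccontr)
  assume a: "a \<noteq> 0"
  define c where "c = \<bar>b\<bar> + 1"
  have c: "0 < c" "\<bar>b\<bar> < c" by (auto simp: c_def)
  have "2 * (a / c) * a + (a / c)\<^sup>2 * b = (a\<^sup>2 / c\<^sup>2) * (2 * c + b)"
    using c by (simp add: field_simps power2_eq_square)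
  moreover have "0 < (a\<^sup>2 / c\<^sup>2) * (2 * c + b)"
    using c a by (intro mult_pos_pos) (auto simp: abs_less_iff)
  ultimately show False using assms[of "a / c"] by simp
qed

(* First-order optimality: along z + t h with h = F z - (z' F z) z the Rayleigh bound reads
   2 t |h|^2 + O(t^2) <= 0 for all t, which forces h = 0. *)
lemma rayleigh_maximizer_eigen:
  assumes sym: "symmetric_on n f" and z: "rayleigh_maximizer n f z" and i: "i < n"
  shows "(\<Sum>j<n. f i j * z j) = quad_form n f z * z i"
proof -
  define \<mu> where "\<mu> = quad_form n f z"
  define h where "h = (\<lambda>i. (\<Sum>j<n. f i j * z j) - \<mu> * z i)"
  have unit: "sq_norm n z = 1" using z unfolding rayleigh_maximizer_def by simp
  have "2 * t * (\<Sum>i<n. (h i)\<^sup>2) + t\<^sup>2 * (quad_form n f h - \<mu> * sq_norm n h) \<le> 0" for t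
  proof -
    have "quad_form n f (\<lambda>i. z i + t * h i) \<le> \<mu> * sq_norm n (\<lambda>i. z i + t * h i)"
      using rayleigh_maximizer_bound[OF z] unfolding \<mu>_def by simp
    moreover have "(\<Sum>i<n. h i * (\<Sum>j<n. f i j * z j)) - \<mu> * (\<Sum>i<n. h i * z i) = (\<Sum>i<n. (h i)\<^sup>2)"
      by (simp add: h_def sum_distrib_left sum_subtractf[symmetric] algebra_simps power2_eq_square)
    ultimately show ?thesis
      unfolding quad_form_expand[OF sym] sq_norm_expand using unit
      by (simp add: algebra_simps \<mu>_def)
  qed
  then have "(\<Sum>i<n. (h i)\<^sup>2) = 0" by (rule linear_coeff_eq_0_if_quadratic_nonpos)
  then have "h i = 0" using i by (subst (asm) sum_nonneg_eq_0_iff) auto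
  then show ?thesis unfolding h_def \<mu>_def by simp
qed

lemma mat_mult_vec_nth:
  "i < n \<Longrightarrow> (mat n n (case_prod f) *\<^sub>v vec n x) $ i = (\<Sum>j<n. f i j * x j)"
  by (simp add: scalar_prod_def lessThan_atLeast0)

lemma eigenvalue_le_rayleigh_maximizer:
  assumes k: "eigenvalue (mat n n (case_prod f)) k" and z: "rayleigh_maximizer n f z"
  shows "k \<le> quad_form n f z"
proof -
  obtain v where "eigenvector (mat n n (case_prod f)) v k" using k unfolding eigenvalue_def by blast
  then have v: "v \<in> carrier_vec n" "v \<noteq> 0\<^sub>v n" "mat n n (case_prod f) *\<^sub>v v = k \<cdot>\<^sub>v v"
    unfolding eigenvector_def by auto
  define x where "x = (\<lambda>i. v $ i)"
  have vx: "v = vec n x" using v(1) by (intro eq_vecI) (auto simp: x_def)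
  have row: "(\<Sum>j<n. f i j * x j) = k * x i" if "i < n" for i
  proof -
    have "(mat n n (case_prod f) *\<^sub>v vec n x) $ i = (k \<cdot>\<^sub>v vec n x) $ i"
      using v(3) vx by simp
    then show ?thesis using that by (subst (asm) mat_mult_vec_nth[OF that]) simp
  qed
  have "quad_form n f x = (\<Sum>i<n. x i * (k * x i))"
    unfolding quad_form_eq_sum_rows by (intro sum.cong refl) (simp add: row)
  also have "\<dots> = k * sq_norm n x"
    unfolding sq_norm_def by (simp add: sum_distrib_left power2_eq_square algebra_simps)
  finally have q: "quad_form n f x = k * sq_norm n x" .
  have "sq_norm n x \<noteq> 0"
    using v(1,2) by (auto simp: sq_norm_eq_0_iff x_def)
  then have "0 < sq_norm n x" using sq_norm_nonneg[of n x] by simp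
  moreover have "k * sq_norm n x \<le> quad_form n f z * sq_norm n x"
    using rayleigh_maximizer_bound[OF z, of x] q by simp
  ultimately show ?thesis by simp
qed

lemma max_eigenvalue_eq_rayleigh_maximizer:
  assumes sym: "symmetric_on n f" and z: "rayleigh_maximizer n f z"
  shows "max_eigenvalue n f = quad_form n f z"
proof -
  let ?M = "mat n n (case_prod f)"
  have "\<exists>i<n. z i \<noteq> 0"
    using z sq_norm_eq_0_iff[of n z] unfolding rayleigh_maximizer_def by auto
  then have nz: "vec n z \<noteq> 0\<^sub>v n" by (metis index_vec index_zero_vec(1))
  have "?M *\<^sub>v vec n z = quad_form n f z \<cdot>\<^sub>v vec n z"
    by (rule eq_vecI)
      (simp_all add: mat_mult_vec_nth rayleigh_maximizer_eigen[OF sym z] del: index_mult_mat_vec)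
  then have "eigenvalue ?M (quad_form n f z)"
    using nz unfolding eigenvalue_def eigenvector_def by (intro exI[of _ "vec n z"]) auto
  moreover have "finite {k. eigenvalue ?M k}"
  proof -
    have "char_poly ?M \<noteq> 0" using degree_monic_char_poly[of ?M n] by auto
    then show ?thesis
      using poly_roots_finite[of "char_poly ?M"] eigenvalue_root_char_poly[of ?M n] by simp
  qed
  ultimately show ?thesis
    unfolding max_eigenvalue_def
    by (intro Max_eqI) (auto intro: eigenvalue_le_rayleigh_maximizer[OF _ z])
qed

lemma quad_form_le_max_eigenvalue:
  assumes sym: "symmetric_on n f" and x: "sq_norm n x = 1"
  shows "quad_form n f x \<le> max_eigenvalue n f"
proof -
  have "0 < n" using x by (cases "n = 0") (simp_all add: sq_norm_def)
  then obtain z where z: "rayleigh_maximizer n f z" using rayleigh_maximizer_exists by blast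
  then show ?thesis
    using x max_eigenvalue_eq_rayleigh_maximizer[OF sym z] unfolding rayleigh_maximizer_def by simp
qed

lemma rayleigh_maximizer_iff:
  assumes "symmetric_on n f" and "sq_norm n x = 1"
  shows "rayleigh_maximizer n f x \<longleftrightarrow> quad_form n f x = max_eigenvalue n f"
proof
  assume "rayleigh_maximizer n f x"
  then show "quad_form n f x = max_eigenvalue n f"
    using max_eigenvalue_eq_rayleigh_maximizer[OF assms(1)] by simp
next
  assume max: "quad_form n f x = max_eigenvalue n f"
  have "quad_form n f y \<le> quad_form n f x" if "sq_norm n y = 1" for y
    using quad_form_le_max_eigenvalue[OF assms(1) that] max by simp
  then show "rayleigh_maximizer n f x"
    using assms(2) unfolding rayleigh_maximizer_def by blast
qed

lemma perron_vector_exists: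
  assumes sym: "symmetric_on n f" and n: "0 < n"
    and nonneg: "\<And>i j. i < n \<Longrightarrow> j < n \<Longrightarrow> 0 \<le> f i j"
    and pos: "\<And>i j. i < n \<Longrightarrow> j < n \<Longrightarrow> i \<noteq> j \<Longrightarrow> 0 < f i j"
  shows "\<exists>x. rayleigh_maximizer n f x \<and> (\<forall>i<n. 0 < x i)"
proof -
  obtain z where z: "rayleigh_maximizer n f z" using rayleigh_maximizer_exists[OF n] by blast
  define x where "x = (\<lambda>i. \<bar>z i\<bar>)"
  have "sq_norm n x = 1" using z by (simp add: rayleigh_maximizer_def sq_norm_def x_def)
  moreover have "quad_form n f z \<le> quad_form n f x"
    unfolding x_def by (rule quad_form_abs_ge[OF nonneg])
  ultimately have x: "rayleigh_maximizer n f x"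
    using z unfolding rayleigh_maximizer_def by fastforce
  have "0 < x i" if i: "i < n" for i
  proof (rule ccontr)
    assume "\<not> 0 < x i"
    then have xi: "x i = 0" by (simp add: x_def)
    then have "(\<Sum>j<n. f i j * x j) = 0" using rayleigh_maximizer_eigen[OF sym x i] by simp
    then have terms: "\<forall>j\<in>{..<n}. f i j * x j = 0"
      using nonneg i by (subst (asm) sum_nonneg_eq_0_iff) (auto simp: x_def)
    have "x j = 0" if "j < n" for j
      using terms[rule_format, of j] pos[OF i that] xi that by (cases "j = i") auto
    then have "sq_norm n x = 0" by (simp add: sq_norm_eq_0_iff)
    then show False using x unfolding rayleigh_maximizer_def by simp
  qed
  then show ?thesis using x by blast
qed

lemma max_eigenvalue_less_if_row_increases:
  assumes f_sym: "symmetric_on n f" and g_sym: "symmetric_on n g"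
    and x: "rayleigh_maximizer n f x" and le: "quad_form n f x \<le> quad_form n g x"
    and i: "i < n" and row_less: "(\<Sum>j<n. f i j * x j) < (\<Sum>j<n. g i j * x j)"
  shows "max_eigenvalue n f < max_eigenvalue n g"
proof (rule ccontr)
  assume not_less: "\<not> ?thesis"
  have unit: "sq_norm n x = 1" using x by (simp add: rayleigh_maximizer_def)
  have f_max: "max_eigenvalue n f = quad_form n f x"
    by (rule max_eigenvalue_eq_rayleigh_maximizer[OF f_sym x])
  have g_x: "quad_form n g x = quad_form n f x"
    using not_less f_max le quad_form_le_max_eigenvalue[OF g_sym unit] by simp
  then have "rayleigh_maximizer n g x"
    using not_less f_max le quad_form_le_max_eigenvalue[OF g_sym unit] rayleigh_maximizer_iff[OF g_sym unit]
    by simp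
  then have "(\<Sum>j<n. g i j * x j) = quad_form n g x * x i"
    by (rule rayleigh_maximizer_eigen[OF g_sym _ i])
  moreover have "(\<Sum>j<n. f i j * x j) = quad_form n f x * x i"
    by (rule rayleigh_maximizer_eigen[OF f_sym x i])
  ultimately show False using row_less g_x by simp
qed

definition star_adj :: "nat \<Rightarrow> nat set \<Rightarrow> nat \<Rightarrow> nat \<Rightarrow> real" where
  "star_adj a X i j = (if (i = a \<and> j \<in> X) \<or> (j = a \<and> i \<in> X) then 1 else 0)"

lemma star_adj_row:
  assumes a: "a < n" and X: "X \<subseteq> {..<n}" and aX: "a \<notin> X"
  shows "(\<Sum>j<n. star_adj a X i j * x j) = (if i = a then sum x X else 0) + (if i \<in> X then x a else 0)"
proof -
  have "(\<Sum>j<n. star_adj a X i j * x j)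
      = (\<Sum>j<n. if i = a \<and> j \<in> X then x j else 0) + (\<Sum>j<n. if j = a \<and> i \<in> X then x j else 0)"
    unfolding star_adj_def using aX by (auto simp: sum.distrib[symmetric] intro!: sum.cong)
  also have "(\<Sum>j<n. if i = a \<and> j \<in> X then x j else 0) = (if i = a then sum x X else 0)"
    using X by (simp add: sum.inter_restrict[symmetric] Int_absorb1)
  also have "(\<Sum>j<n. if j = a \<and> i \<in> X then x j else 0) = (if i \<in> X then x a else 0)"
    using a by (simp add: sum.delta')
  finally show ?thesis .
qed

lemma quad_form_star_adj:
  assumes a: "a < n" and X: "X \<subseteq> {..<n}" and aX: "a \<notin> X"
  shows "quad_form n (star_adj a X) x = 2 * x a * sum x X"
proof -
  have "quad_form n (star_adj a X) x
      = (\<Sum>i<n. (if i = a then x a * sum x X else 0) + (if i \<in> X then x i * x a else 0))"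
    unfolding quad_form_eq_sum_rows star_adj_row[OF assms] by (intro sum.cong) (auto simp: algebra_simps)
  also have "\<dots> = x a * sum x X + (\<Sum>i\<in>X. x i * x a)"
    using a X by (simp add: sum.distrib sum.inter_restrict[symmetric] Int_absorb1)
  also have "(\<Sum>i\<in>X. x i * x a) = x a * sum x X"
    by (simp add: sum_distrib_left mult.commute)
  finally show ?thesis by simp
qed

lemma max_eigenvalue_less_by_star_shift_to_heavier:
  assumes f_sym: "symmetric_on n f" and g_sym: "symmetric_on n g"
    and x: "rayleigh_maximizer n f x" and x_pos: "\<And>i. i < n \<Longrightarrow> 0 < x i" and heavier: "x v \<le> x u"
    and u: "u < n" and v: "v < n" and uv: "u \<noteq> v"
    and S: "S \<noteq> {}" "S \<subseteq> {..<n}" "u \<notin> S" "v \<notin> S"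
    and g_ge: "\<And>i j. i < n \<Longrightarrow> j < n \<Longrightarrow> f i j + star_adj u S i j - star_adj v S i j \<le> g i j"
  shows "max_eigenvalue n f < max_eigenvalue n g"
proof -
  let ?h = "\<lambda>i j. f i j + star_adj u S i j - star_adj v S i j"
  have sum_S: "0 < sum x S"
    using S x_pos finite_subset[OF S(2)] by (intro sum_pos) auto
  have "quad_form n f x \<le> quad_form n ?h x"
    unfolding quad_form_add_diff quad_form_star_adj[OF u S(2,3)] quad_form_star_adj[OF v S(2,4)]
    using heavier sum_S by (simp add: mult_right_mono)
  also have "\<dots> \<le> quad_form n g x"
    using x_pos g_ge by (intro quad_form_mono) (auto simp: less_imp_le)
  finally have le: "quad_form n f x \<le> quad_form n g x" .
  have "(\<Sum>j<n. f u j * x j) < (\<Sum>j<n. f u j * x j) + sum x S"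
    using sum_S by simp
  also have "\<dots> = (\<Sum>j<n. ?h u j * x j)"
    using star_adj_row[OF u S(2,3), of u x] star_adj_row[OF v S(2,4), of u x] uv S(3)
    by (simp add: algebra_simps sum.distrib sum_subtractf)
  also have "\<dots> \<le> (\<Sum>j<n. g u j * x j)"
    using x_pos g_ge u by (intro sum_mono mult_right_mono) (auto simp: less_imp_le)
  finally show ?thesis
    by (rule max_eigenvalue_less_if_row_increases[OF f_sym g_sym x le u])
qed

(* With a positive Perron vector x of f, moving the star S from v to u changes the form by
   2 (x u - x v) sum x S, which is good when x u >= x v; otherwise the mirrored move of R from u
   to v, realised inside g by the relabelling sigma, gains 2 (x v - x u) sum x R. *)
lemma max_eigenvalue_less_by_star_shift:
  fixes f g :: "nat \<Rightarrow> nat \<Rightarrow> real" and \<sigma> :: "nat \<Rightarrow> nat"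
  assumes f_sym: "symmetric_on n f" and g_sym: "symmetric_on n g"
    and f_nonneg: "\<And>i j. i < n \<Longrightarrow> j < n \<Longrightarrow> 0 \<le> f i j"
    and f_pos: "\<And>i j. i < n \<Longrightarrow> j < n \<Longrightarrow> i \<noteq> j \<Longrightarrow> 0 < f i j"
    and u: "u < n" and v: "v < n" and uv: "u \<noteq> v"
    and S: "S \<noteq> {}" "S \<subseteq> {..<n}" "u \<notin> S" "v \<notin> S"
    and R: "R \<noteq> {}" "R \<subseteq> {..<n}" "u \<notin> R" "v \<notin> R"
    and \<sigma>: "\<And>i. i < n \<Longrightarrow> \<sigma> i < n" "\<And>i. i < n \<Longrightarrow> \<sigma> (\<sigma> i) = i"
    and g_ge: "\<And>i j. i < n \<Longrightarrow> j < n \<Longrightarrow> f i j + star_adj u S i j - star_adj v S i j \<le> g i j"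
    and g_\<sigma>_ge: "\<And>i j. i < n \<Longrightarrow> j < n \<Longrightarrow>
      f i j + star_adj v R i j - star_adj u R i j \<le> g (\<sigma> i) (\<sigma> j)"
  shows "max_eigenvalue n f < max_eigenvalue n g"
proof -
  obtain x where x: "rayleigh_maximizer n f x" and x_pos: "\<forall>i<n. 0 < x i"
    using perron_vector_exists[OF f_sym _ f_nonneg f_pos] u by auto
  consider "x v \<le> x u" | "x u < x v" by linarith
  then show ?thesis
  proof cases
    case 1
    then show ?thesis
      using max_eigenvalue_less_by_star_shift_to_heavier[OF f_sym g_sym x _ _ u v uv S g_ge] x_pos
      by blast
  next
    case 2
    define y where "y = (\<lambda>i. x (\<sigma> i))"
    have bij: "bij_betw \<sigma> {..<n} {..<n}"
      by (rule bij_betw_byWitness[of _ \<sigma>]) (use \<sigma> in auto)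
    have "0 < sum x R"
      using R x_pos finite_subset[OF R(2)] by (intro sum_pos) auto
    then have "max_eigenvalue n f < quad_form n (\<lambda>i j. f i j + star_adj v R i j - star_adj u R i j) x"
      unfolding max_eigenvalue_eq_rayleigh_maximizer[OF f_sym x] quad_form_add_diff
        quad_form_star_adj[OF u R(2,3)] quad_form_star_adj[OF v R(2,4)]
      using 2 by simp
    also have "\<dots> \<le> quad_form n (\<lambda>i j. g (\<sigma> i) (\<sigma> j)) x"
      using x_pos g_\<sigma>_ge by (intro quad_form_mono) auto
    also have "\<dots> = quad_form n (\<lambda>i j. g (\<sigma> i) (\<sigma> j)) (\<lambda>i. y (\<sigma> i))"
      unfolding quad_form_def y_def using \<sigma> by (intro sum.cong) auto
    also have "\<dots> = quad_form n g y"
      by (rule quad_form_reindex[OF bij])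
    also have "\<dots> \<le> max_eigenvalue n g"
      using quad_form_le_max_eigenvalue[OF g_sym] sq_norm_reindex[OF bij] x
      by (simp add: y_def rayleigh_maximizer_def)
    finally show ?thesis .
  qed
qed

section \<open>Distances in graphs and their complements\<close>

lemma walk_Nil [simp]: "\<not> walk E []"
  unfolding walk_def by simp

lemma walk_singleton [simp]: "walk E [x]"
  unfolding walk_def by simp

lemma walk_Cons_Cons [simp]: "walk E (x # y # xs) \<longleftrightarrow> {x, y} \<in> E \<and> walk E (y # xs)"
  unfolding walk_def by (auto simp: nth_Cons split: nat.splits)

lemma walk_snoc:
  assumes "walk E xs" and "{last xs, y} \<in> E"
  shows "walk E (xs @ [y])"
  using assms by (induction xs rule: induct_list012) auto

lemma walk_rev: "walk E xs \<Longrightarrow> walk E (rev xs)"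
proof (induction xs rule: induct_list012)
  case (3 x y xs)
  then have "walk E (rev (y # xs) @ [x])"
    by (intro walk_snoc) (auto simp: insert_commute)
  then show ?case by simp
qed simp_all

lemma walk_extend:
  assumes "walk E xs" and "last xs = y \<or> {last xs, y} \<in> E"
  shows "\<exists>ys. walk E ys \<and> hd ys = hd xs \<and> last ys = y \<and> length ys \<le> Suc (length xs)"
  using assms walk_snoc[OF assms(1)] by (metis (no_types) hd_append2 last_snoc le_SucI length_append_singleton
      order_refl walk_def)

lemma gdist_le:
  assumes "walk E xs" "hd xs = x" "last xs = y"
  shows "gdist E x y < length xs"
proof -
  have len: "length xs = Suc (length xs - 1)" using assms(1) by (simp add: walk_def)
  then have "gdist E x y \<le> length xs - 1"
    unfolding gdist_def using assms by (intro Least_le) blast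
  then show ?thesis using len by linarith
qed

lemma gdist_witness:
  assumes "walk E xs" "hd xs = x" "last xs = y"
  shows "\<exists>ys. walk E ys \<and> hd ys = x \<and> last ys = y \<and> length ys = Suc (gdist E x y)"
proof -
  have "length xs = Suc (length xs - 1)" using assms(1) by (simp add: walk_def)
  then have "\<exists>k ys. walk E ys \<and> hd ys = x \<and> last ys = y \<and> length ys = Suc k"
    using assms by blast
  then show ?thesis unfolding gdist_def by (rule LeastI_ex)
qed

lemma gdist_self [simp]: "gdist E x x = 0"
  using gdist_le[of E "[x]"] by simp

lemma gdist_ge_1:
  assumes "walk E xs" "hd xs = x" "last xs = y" and "x \<noteq> y"
  shows "1 \<le> gdist E x y"
  using gdist_witness[OF assms(1-3)] assms(4) by (metis One_nat_def Suc_leI last_ConsL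
      length_0_conv length_Suc_conv list.sel(1) neq0_conv)

lemma gdist_ge_2:
  assumes "walk E xs" "hd xs = x" "last xs = y" and "x \<noteq> y" "{x, y} \<notin> E"
  shows "2 \<le> gdist E x y"
proof -
  obtain ys where ys: "walk E ys" "hd ys = x" "last ys = y" "length ys = Suc (gdist E x y)"
    using gdist_witness[OF assms(1-3)] by blast
  have "gdist E x y \<noteq> 1"
  proof
    assume "gdist E x y = 1"
    then obtain a b where "ys = [a, b]" using ys(4) by (auto simp: length_Suc_conv)
    then show False using ys assms(5) by simp
  qed
  then show ?thesis using gdist_ge_1[OF assms(1-4)] by simp
qed

lemma gdist_edge:
  assumes "{x, y} \<in> E" "x \<noteq> y"
  shows "gdist E x y = 1"
proof -
  have "gdist E x y < 2" using gdist_le[of E "[x, y]" x y] assms by simp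
  moreover have "1 \<le> gdist E x y" using gdist_ge_1[of E "[x, y]" x y] assms by simp
  ultimately show ?thesis by simp
qed

lemma gdist_commute: "gdist E x y = gdist E y x"
proof -
  have walks: "(\<exists>xs. walk E xs \<and> hd xs = x \<and> last xs = y \<and> length xs = Suc k)
      \<longleftrightarrow> (\<exists>xs. walk E xs \<and> hd xs = y \<and> last xs = x \<and> length xs = Suc k)" for x y k
    by (metis last_rev length_rev rev_rev_ident walk_rev)
  show ?thesis unfolding gdist_def walks ..
qed

lemma gdist_le_3:
  assumes "x = a \<or> {x, a} \<in> E" "a = b \<or> {a, b} \<in> E" "b = y \<or> {b, y} \<in> E"
  shows "gdist E x y \<le> 3"
proof -
  obtain ys1 where "walk E ys1" "hd ys1 = x" "last ys1 = a" "length ys1 \<le> 2"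
    using walk_extend[of E "[x]" a] assms(1) by auto
  then obtain ys2 where "walk E ys2" "hd ys2 = x" "last ys2 = b" "length ys2 \<le> 3"
    using walk_extend[of E ys1 b] assms(2) by fastforce
  then obtain ys3 where "walk E ys3" "hd ys3 = x" "last ys3 = y" "length ys3 \<le> 4"
    using walk_extend[of E ys2 y] assms(3) by fastforce
  then show ?thesis using gdist_le[of E ys3 x y] by simp
qed

lemma symmetric_on_gdist: "symmetric_on n (\<lambda>i j. real (gdist E i j))"
  unfolding symmetric_on_def by (simp add: gdist_commute)

lemma dist_spectral_radius_eq_max_eigenvalue:
  "dist_spectral_radius n E = max_eigenvalue n (\<lambda>i j. real (gdist E i j))"
  unfolding dist_spectral_radius_def distance_matrix_def max_eigenvalue_def ..

lemma max_eigenvalue_cong: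
  "(\<And>i j. i < n \<Longrightarrow> j < n \<Longrightarrow> f i j = g i j) \<Longrightarrow> max_eigenvalue n f = max_eigenvalue n g"
  unfolding max_eigenvalue_def by (metis (no_types, lifting) case_prod_conv cong_mat)

lemma diam_attained:
  assumes "0 < n"
  shows "\<exists>x<n. \<exists>y<n. diam n E = gdist E x y"
proof -
  let ?A = "{gdist E x y | x y. x < n \<and> y < n}"
  have "?A = (\<lambda>(x, y). gdist E x y) ` ({..<n} \<times> {..<n})" by auto
  then have "finite ?A" by simp
  moreover have "?A \<noteq> {}" using assms by blast
  ultimately have "Max ?A \<in> ?A" by (rule Max_in)
  then show ?thesis unfolding diam_def by blast
qed

lemma edge_has_common_non_neighbour_if_diam_ge_4:
  assumes n: "0 < n" and diam: "4 \<le> diam n E" and e: "{i, j} \<in> E"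
  shows "\<exists>z<n. z \<noteq> i \<and> z \<noteq> j \<and> {i, z} \<notin> E \<and> {j, z} \<notin> E"
proof (rule ccontr)
  assume "\<not> ?thesis"
  then have near: "\<exists>c\<in>{i, j}. z = c \<or> {z, c} \<in> E" if "z < n" for z
    using that by (auto simp: insert_commute)
  obtain x y where xy: "x < n" "y < n" "diam n E = gdist E x y" using diam_attained[OF n] by blast
  obtain c d where "c \<in> {i, j}" "x = c \<or> {x, c} \<in> E" "d \<in> {i, j}" "y = d \<or> {y, d} \<in> E"
    using near[OF xy(1)] near[OF xy(2)] by blast
  moreover have "{j, i} \<in> E" using e by (simp add: insert_commute)
  ultimately have "gdist E x y \<le> 3"
    using e by (intro gdist_le_3[of x c E d y]) (auto simp: insert_commute)
  then show False using diam xy(3) by simp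
qed

lemma in_complement_iff:
  "{x, y} \<in> complement n E \<longleftrightarrow> x < n \<and> y < n \<and> x \<noteq> y \<and> {x, y} \<notin> E"
  unfolding complement_def by (auto simp: doubleton_eq_iff insert_commute)

(* J - I + A(E): the distance matrix of the complement of E whenever that complement has
   diameter at most 2. *)
definition diam2_compl_dist :: "nat set set \<Rightarrow> nat \<Rightarrow> nat \<Rightarrow> real" where
  "diam2_compl_dist E i j = (if i = j then 0 else if {i, j} \<in> E then 2 else 1)"

lemma symmetric_on_diam2_compl_dist: "symmetric_on n (diam2_compl_dist E)"
  unfolding symmetric_on_def diam2_compl_dist_def by (simp add: insert_commute)

lemma gdist_complement_eq_diam2_compl_dist:
  assumes common: "\<And>i j. {i, j} \<in> E \<Longrightarrow> \<exists>z<n. z \<noteq> i \<and> z \<noteq> j \<and> {i, z} \<notin> E \<and> {j, z} \<notin> E"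
    and i: "i < n" and j: "j < n"
  shows "real (gdist (complement n E) i j) = diam2_compl_dist E i j"
proof (cases "i = j \<or> {i, j} \<notin> E")
  case True
  then show ?thesis
    using gdist_edge[of i j "complement n E"] i j by (auto simp: diam2_compl_dist_def in_complement_iff)
next
  case False
  then obtain z where z: "z < n" "z \<noteq> i" "z \<noteq> j" "{i, z} \<notin> E" "{j, z} \<notin> E"
    using common by blast
  then have w: "walk (complement n E) [i, z, j]"
    using i j by (simp add: in_complement_iff insert_commute)
  have "gdist (complement n E) i j < 3"
    using gdist_le[of "complement n E" "[i, z, j]" i j] w by simp
  moreover have "2 \<le> gdist (complement n E) i j"
    using gdist_ge_2[of "complement n E" "[i, z, j]" i j] w False by (simp add: in_complement_iff)
  ultimately have "gdist (complement n E) i j = 2" by simp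
  then show ?thesis using False by (simp add: diam2_compl_dist_def)
qed

lemma diam2_compl_dist_le_gdist_complement:
  assumes "walk (complement n E) xs" "hd xs = i" "last xs = j"
  shows "diam2_compl_dist E i j \<le> real (gdist (complement n E) i j)"
  using gdist_ge_1[OF assms] gdist_ge_2[OF assms]
  by (auto simp: diam2_compl_dist_def in_complement_iff)

(* Every vertex equals or is adjacent in the complement to a or b, and a, b are adjacent there. *)
lemma complement_walk_exists:
  assumes a: "a < n" and b: "b < n" and ab: "a \<noteq> b" "{a, b} \<notin> E"
    and no_common: "\<And>z. z < n \<Longrightarrow> z \<noteq> a \<Longrightarrow> z \<noteq> b \<Longrightarrow> {a, z} \<notin> E \<or> {b, z} \<notin> E"
    and i: "i < n" and j: "j < n"
  shows "\<exists>xs. walk (complement n E) xs \<and> hd xs = i \<and> last xs = j"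
proof -
  let ?G = "complement n E"
  have near: "\<exists>c\<in>{a, b}. z = c \<or> {z, c} \<in> ?G" if "z < n" for z
    using no_common[OF that] that a b by (auto simp: in_complement_iff insert_commute)
  obtain c d where c: "c \<in> {a, b}" "i = c \<or> {i, c} \<in> ?G" and d: "d \<in> {a, b}" "j = d \<or> {j, d} \<in> ?G"
    using near[OF i] near[OF j] by blast
  have "{a, b} \<in> ?G" using a b ab by (simp add: in_complement_iff)
  then have cd: "c = d \<or> {c, d} \<in> ?G" using c(1) d(1) by (auto simp: insert_commute)
  obtain ys1 where "walk ?G ys1" "hd ys1 = i" "last ys1 = c"
    using walk_extend[of ?G "[i]" c] c(2) by auto
  then obtain ys2 where "walk ?G ys2" "hd ys2 = i" "last ys2 = d"
    using walk_extend[of ?G ys1 d] cd by auto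
  then obtain ys3 where "walk ?G ys3" "hd ys3 = i" "last ys3 = j"
    using walk_extend[of ?G ys2 j] d(2) by (auto simp: insert_commute)
  then show ?thesis by blast
qed

section \<open>Generalized tree shifts\<close>

definition shift_edges :: "nat set set \<Rightarrow> nat \<Rightarrow> nat \<Rightarrow> nat set \<Rightarrow> nat set set" where
  "shift_edges E v u X = (E - {{v, x} | x. x \<in> X}) \<union> {{u, x} | x. x \<in> X}"

lemma doubleton_in_star_iff:
  "{x, y} \<in> {{c, z} | z. z \<in> X} \<longleftrightarrow> (x = c \<and> y \<in> X) \<or> (y = c \<and> x \<in> X)"
  by (auto simp: doubleton_eq_iff)

lemma in_shift_edges_iff:
  "{x, y} \<in> shift_edges E v u X \<longleftrightarrow>
     ({x, y} \<in> E \<and> \<not> ((x = v \<and> y \<in> X) \<or> (y = v \<and> x \<in> X))) \<or> (x = u \<and> y \<in> X) \<or> (y = u \<and> x \<in> X)"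
  unfolding shift_edges_def Un_iff Diff_iff doubleton_in_star_iff ..

lemma diam2_compl_dist_shift_edges:
  assumes "u \<noteq> v" "u \<notin> X" "v \<notin> X"
    and "\<And>x. x \<in> X \<Longrightarrow> {v, x} \<in> E" "\<And>x. x \<in> X \<Longrightarrow> {u, x} \<notin> E"
  shows "diam2_compl_dist (shift_edges E v u X) i j
    = diam2_compl_dist E i j + star_adj u X i j - star_adj v X i j"
  using assms
  by (auto simp: diam2_compl_dist_def star_adj_def in_shift_edges_iff insert_commute)

locale gts_path =
  fixes n :: nat and T :: "nat set set" and p :: "nat list"
  assumes graph: "graph n T" and acyclic: "\<not> has_cycle T" and path: "path T p"
    and length_p: "2 \<le> length p"
    and interior_deg: "\<And>i. 0 < i \<Longrightarrow> i < length p - 1 \<Longrightarrow> deg T (p ! i) = 2"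
    and u_not_pendant: "\<not> pendant T (p ! 0)"
    and v_not_pendant: "\<not> pendant T (p ! (length p - 1))"
begin

abbreviation "k \<equiv> length p - 1"
abbreviation "u \<equiv> p ! 0"
abbreviation "v \<equiv> p ! k"
abbreviation "w \<equiv> p ! (k - 1)"
abbreviation "S \<equiv> nbrs T v - {w}"
abbreviation "R \<equiv> nbrs T u - {p ! 1}"

lemma k_pos: "0 < k"
  using length_p by simp

lemma walk_p: "walk T p" and distinct_p: "distinct p"
  using path unfolding path_def by simp_all

lemma path_edge: "i < k \<Longrightarrow> {p ! i, p ! Suc i} \<in> T"
  using walk_p unfolding walk_def by simp

lemma nth_p_eq_iff: "i \<le> k \<Longrightarrow> j \<le> k \<Longrightarrow> p ! i = p ! j \<longleftrightarrow> i = j"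
  using distinct_p length_p by (simp add: nth_eq_iff_index_eq)

lemma nth_p_in_set: "i \<le> k \<Longrightarrow> p ! i \<in> set p"
  using length_p by simp

lemma no_loop: "{x, x} \<notin> T"
  using graph unfolding graph_def by (metis doubleton_eq_iff)

lemma edge_lt: "{x, y} \<in> T \<Longrightarrow> x < n \<and> y < n"
  using graph unfolding graph_def by (metis doubleton_eq_iff)

lemma in_nbrs_iff: "y \<in> nbrs T x \<longleftrightarrow> {x, y} \<in> T"
  unfolding nbrs_def by simp

lemma nth_p_lt:
  assumes "i \<le> k"
  shows "p ! i < n"
proof (cases "i < k")
  case True
  then show ?thesis using edge_lt[OF path_edge[OF True]] by simp
next
  case False
  then have "i = Suc (k - 1)" using assms k_pos by simp
  then show ?thesis using edge_lt[OF path_edge[of "k - 1"]] k_pos by simp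
qed

lemma u_neq_v: "u \<noteq> v"
  using nth_p_eq_iff[of 0 k] k_pos by simp

lemma interior_nbrs:
  assumes "0 < i" "i < k"
  shows "nbrs T (p ! i) = {p ! (i - 1), p ! (i + 1)}"
proof -
  have "finite (nbrs T (p ! i))"
    by (rule finite_subset[of _ "{..<n}"]) (auto simp: in_nbrs_iff dest: edge_lt)
  moreover have "{p ! (i - 1), p ! (i + 1)} \<subseteq> nbrs T (p ! i)"
    using path_edge[of "i - 1"] path_edge[of i] assms by (simp add: in_nbrs_iff insert_commute)
  moreover have "card {p ! (i - 1), p ! (i + 1)} = card (nbrs T (p ! i))"
    using nth_p_eq_iff[of "i - 1" "i + 1"] interior_deg[of i] assms by (simp add: deg_def)
  ultimately show ?thesis by (metis card_subset_eq)
qed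

lemma cycle_if_closed:
  assumes "walk T (p @ xs @ [u])" "1 \<le> length xs \<or> 2 \<le> k" "distinct (xs @ [u])" "set xs \<inter> set p = {}"
  shows False
proof -
  have "hd (p @ xs @ [u]) = last (p @ xs @ [u])" using length_p by (cases p) auto
  moreover have "distinct (tl (p @ xs @ [u]))"
    using distinct_p assms(3,4) length_p by (cases p) auto
  ultimately have "has_cycle T"
    using assms(1,2) length_p unfolding has_cycle_def by (intro exI[of _ "p @ xs @ [u]"]) auto
  then show False using acyclic by simp
qed

lemma last_p: "last p = v"
  using length_p by (subst last_conv_nth) auto

lemma u_v_not_adjacent: "2 \<le> k \<Longrightarrow> {u, v} \<notin> T"
  using cycle_if_closed[of "[]"] walk_snoc[OF walk_p, of u] by (auto simp: last_p insert_commute)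

lemma no_chord:
  assumes ab: "a < b" "b \<le> k" and e: "{p ! a, p ! b} \<in> T"
  shows "b = a + 1"
proof (cases "a = 0")
  case False
  have "p ! b \<in> nbrs T (p ! a)" using e by (simp add: in_nbrs_iff)
  then have "p ! b \<in> {p ! (a - 1), p ! (a + 1)}"
    using interior_nbrs[of a] ab False by simp
  then show ?thesis using nth_p_eq_iff[of b "a - 1"] nth_p_eq_iff[of b "a + 1"] ab by auto
next
  case a0: True
  show ?thesis
  proof (cases "b = k")
    case True
    then show ?thesis using u_v_not_adjacent e a0 ab by fastforce
  next
    case False
    have "p ! a \<in> nbrs T (p ! b)" using e by (simp add: in_nbrs_iff insert_commute)
    then have "p ! a \<in> {p ! (b - 1), p ! (b + 1)}"
      using interior_nbrs[of b] ab False a0 by simp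
    then show ?thesis using nth_p_eq_iff[of a "b - 1"] nth_p_eq_iff[of a "b + 1"] ab False by auto
  qed
qed

lemma path_adjacent_iff:
  assumes "a \<le> k" "b \<le> k"
  shows "{p ! a, p ! b} \<in> T \<longleftrightarrow> a = b + 1 \<or> b = a + 1"
proof
  assume e: "{p ! a, p ! b} \<in> T"
  then have "a \<noteq> b" using no_loop by auto
  then consider "a < b" | "b < a" by linarith
  then show "a = b + 1 \<or> b = a + 1"
    by cases (use no_chord[of a b] no_chord[of b a] assms e in \<open>auto simp: insert_commute\<close>)
next
  assume "a = b + 1 \<or> b = a + 1"
  then show "{p ! a, p ! b} \<in> T"
    using path_edge[of a] path_edge[of b] assms by (auto simp: insert_commute)
qed

lemma S_disjoint_path: "s \<in> S \<Longrightarrow> s \<notin> set p"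
proof
  assume s: "s \<in> S" and "s \<in> set p"
  then obtain j where "j < length p" "s = p ! j" by (metis in_set_conv_nth)
  then have j: "j \<le> k" "s = p ! j" by simp_all
  then have "{p ! k, p ! j} \<in> T" "j \<noteq> k - 1" using s by (auto simp: in_nbrs_iff)
  then show False using path_adjacent_iff[of k j] j by auto
qed

lemma R_disjoint_path: "r \<in> R \<Longrightarrow> r \<notin> set p"
proof
  assume r: "r \<in> R" and "r \<in> set p"
  then obtain j where "j < length p" "r = p ! j" by (metis in_set_conv_nth)
  then have j: "j \<le> k" "r = p ! j" by simp_all
  then have "{p ! 0, p ! j} \<in> T" "j \<noteq> 1" using r by (auto simp: in_nbrs_iff)
  then show False using path_adjacent_iff[of 0 j] j by auto
qed

lemma off_path_adjacent_iff:
  assumes a: "a \<le> k" and y: "y \<notin> set p"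
  shows "{p ! a, y} \<in> T \<longleftrightarrow> (a = 0 \<and> y \<in> R) \<or> (a = k \<and> y \<in> S)"
proof (cases "0 < a \<and> a < k")
  case True
  then have "y \<notin> nbrs T (p ! a)"
    using interior_nbrs[of a] nth_p_in_set[of "a - 1"] nth_p_in_set[of "a + 1"] y by auto
  then show ?thesis using True by (simp add: in_nbrs_iff)
next
  case False
  then show ?thesis
    using a y nth_p_in_set[of 1] nth_p_in_set[of "k - 1"] k_pos by (auto simp: in_nbrs_iff)
qed

lemma R_disjoint_S: "r \<in> R \<Longrightarrow> r \<notin> S"
proof
  assume r: "r \<in> R" and "r \<in> S"
  then have "walk T ((p @ [r]) @ [u])"
    by (intro walk_snoc) (auto simp: walk_snoc walk_p last_p in_nbrs_iff insert_commute)
  moreover have "r \<noteq> u" using r no_loop by (auto simp: in_nbrs_iff)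
  ultimately show False
    using cycle_if_closed[of "[r]"] R_disjoint_path[OF r] by simp
qed

lemma S_nonempty: "S \<noteq> {}"
proof
  assume "S = {}"
  moreover have "w \<in> nbrs T v"
    using path_adjacent_iff[of k "k - 1"] k_pos by (simp add: in_nbrs_iff)
  ultimately have "nbrs T v = {w}" by auto
  then show False using v_not_pendant by (simp add: pendant_def deg_def)
qed

lemma R_nonempty: "R \<noteq> {}"
proof
  assume "R = {}"
  moreover have "p ! 1 \<in> nbrs T u"
    using path_adjacent_iff[of 0 1] k_pos by (simp add: in_nbrs_iff)
  ultimately have "nbrs T u = {p ! 1}" by auto
  then show False using u_not_pendant by (simp add: pendant_def deg_def)
qed

end

lemma in_shift_edges_iff_unmoved:
  "x \<notin> X \<Longrightarrow> y \<notin> X \<Longrightarrow> {x, y} \<in> shift_edges E v u X \<longleftrightarrow> {x, y} \<in> E"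
  by (auto simp: in_shift_edges_iff)

lemma in_shift_edges_iff_away:
  "x \<notin> {u, v} \<Longrightarrow> y \<notin> {u, v} \<Longrightarrow> {x, y} \<in> shift_edges E v u X \<longleftrightarrow> {x, y} \<in> E"
  by (auto simp: in_shift_edges_iff)

context gts_path
begin

abbreviation "T1 \<equiv> shift_edges T v u S"
abbreviation "T1' \<equiv> shift_edges T u v R"

lemma in_set_p_iff: "x \<in> set p \<longleftrightarrow> (\<exists>a\<le>k. x = p ! a)"
proof
  assume "x \<in> set p"
  then obtain a where "a < length p" "p ! a = x" by (metis in_set_conv_nth)
  then show "\<exists>a\<le>k. x = p ! a" by (intro exI[of _ a]) auto
qed (use nth_p_in_set in blast)

lemma nth_p_notin_S: "a \<le> k \<Longrightarrow> p ! a \<notin> S"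
  using S_disjoint_path nth_p_in_set by blast

lemma nth_p_notin_R: "a \<le> k \<Longrightarrow> p ! a \<notin> R"
  using R_disjoint_path nth_p_in_set by blast

lemma S_not_adjacent_u: "s \<in> S \<Longrightarrow> {u, s} \<notin> T"
  using off_path_adjacent_iff[of 0 s] S_disjoint_path R_disjoint_S k_pos by auto

lemma R_not_adjacent_v: "r \<in> R \<Longrightarrow> {v, r} \<notin> T"
  using off_path_adjacent_iff[of k r] R_disjoint_path R_disjoint_S k_pos by auto

lemma shift_adjacent_off_path_iff:
  assumes a: "a \<le> k" and y: "y \<notin> set p"
  shows "{p ! a, y} \<in> T1 \<longleftrightarrow> a = 0 \<and> y \<in> R \<union> S"
  using off_path_adjacent_iff[OF a y] S_disjoint_path nth_p_in_set[OF a] nth_p_eq_iff[OF a] y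
    nth_p_in_set[of 0] nth_p_in_set[of k] k_pos
  by (auto simp: in_shift_edges_iff)

lemma mirror_shift_adjacent_off_path_iff:
  assumes a: "a \<le> k" and y: "y \<notin> set p"
  shows "{p ! a, y} \<in> T1' \<longleftrightarrow> a = k \<and> y \<in> R \<union> S"
  using off_path_adjacent_iff[OF a y] R_disjoint_path nth_p_in_set[OF a] nth_p_eq_iff[OF a] y
    nth_p_in_set[of 0] nth_p_in_set[of k] k_pos
  by (auto simp: in_shift_edges_iff)

definition reversal :: "nat \<Rightarrow> nat" where
  "reversal z = (case map_of (zip p (rev p)) z of Some y \<Rightarrow> y | None \<Rightarrow> z)"

lemma reversal_nth:
  assumes "a \<le> k"
  shows "reversal (p ! a) = p ! (k - a)"
proof -
  have "map_of (zip p (rev p)) (p ! a) = Some (rev p ! a)"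
    using distinct_p assms length_p by (intro map_of_zip_nth) auto
  moreover have "rev p ! a = p ! (k - a)" using assms length_p by (simp add: rev_nth)
  ultimately show ?thesis by (simp add: reversal_def)
qed

lemma reversal_off_path:
  assumes "z \<notin> set p"
  shows "reversal z = z"
proof -
  have "fst ` set (zip p (rev p)) = set p" by (metis length_rev map_fst_zip set_map)
  then have "map_of (zip p (rev p)) z = None" using assms by (simp add: map_of_eq_None_iff)
  then show ?thesis unfolding reversal_def by (simp only: option.case)
qed

lemma reversal_reversal: "reversal (reversal z) = z"
  using length_p
  by (cases "z \<in> set p") (auto simp: in_set_p_iff reversal_nth reversal_off_path)

lemma reversal_lt: "z < n \<Longrightarrow> reversal z < n"
  by (cases "z \<in> set p") (auto simp: in_set_p_iff reversal_nth reversal_off_path nth_p_lt)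

lemma reversal_shift_edges_iff: "{reversal i, reversal j} \<in> T1 \<longleftrightarrow> {i, j} \<in> T1'"
proof -
  have on_path: "{p ! a, p ! b} \<in> T1 \<longleftrightarrow> a = b + 1 \<or> b = a + 1"
    "{p ! a, p ! b} \<in> T1' \<longleftrightarrow> a = b + 1 \<or> b = a + 1" if "a \<le> k" "b \<le> k" for a b
    using in_shift_edges_iff_unmoved[OF nth_p_notin_S[OF that(1)] nth_p_notin_S[OF that(2)], of T v u]
      in_shift_edges_iff_unmoved[OF nth_p_notin_R[OF that(1)] nth_p_notin_R[OF that(2)], of T u v]
      path_adjacent_iff[OF that] by simp_all
  consider (both) a b where "a \<le> k" "b \<le> k" "i = p ! a" "j = p ! b"
    | (left) a where "a \<le> k" "i = p ! a" "j \<notin> set p"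
    | (right) b where "b \<le> k" "i \<notin> set p" "j = p ! b"
    | (neither) "i \<notin> set p" "j \<notin> set p"
    by (metis in_set_p_iff)
  then show ?thesis
  proof cases
    case both
    then show ?thesis using on_path by (auto simp: reversal_nth)
  next
    case left
    then show ?thesis
      using shift_adjacent_off_path_iff[of "k - a" j] mirror_shift_adjacent_off_path_iff[of a j] k_pos
      by (auto simp: reversal_nth reversal_off_path)
  next
    case right
    then show ?thesis
      using shift_adjacent_off_path_iff[of "k - b" i] mirror_shift_adjacent_off_path_iff[of b i] k_pos
      by (auto simp: reversal_nth reversal_off_path insert_commute)
  next
    case neither
    moreover have "u \<in> set p" "v \<in> set p" using nth_p_in_set[of 0] nth_p_in_set[of k] by simp_all
    ultimately show ?thesis
      using in_shift_edges_iff_away[of i u v j T S] in_shift_edges_iff_away[of i v u j T R]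
      by (auto simp: reversal_off_path)
  qed
qed

lemma diam2_compl_dist_reversal:
  "diam2_compl_dist T1 (reversal i) (reversal j) = diam2_compl_dist T1' i j"
proof -
  have "reversal i = reversal j \<longleftrightarrow> i = j" by (metis reversal_reversal)
  then show ?thesis unfolding diam2_compl_dist_def reversal_shift_edges_iff by simp
qed

lemma v_pendant_in_shift: "{v, z} \<in> T1 \<Longrightarrow> z = w"
proof (cases "z \<in> set p")
  case True
  assume e: "{v, z} \<in> T1"
  obtain b where b: "b \<le> k" "z = p ! b" using True in_set_p_iff by blast
  then have "{p ! k, p ! b} \<in> T"
    using e in_shift_edges_iff_unmoved[OF nth_p_notin_S[of k] nth_p_notin_S[OF b(1)]] by simp
  then show ?thesis using path_adjacent_iff[of k b] b by auto
next
  case False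
  then show "{v, z} \<in> T1 \<Longrightarrow> z = w" using shift_adjacent_off_path_iff[of k z] k_pos by simp
qed

(* For k = 1 the far vertex comes from diam T >= 4, otherwise any vertex of S will do. *)
lemma shift_far_vertex_exists:
  assumes diam: "4 \<le> diam n T"
  shows "\<exists>b<n. b \<noteq> v \<and> {v, b} \<notin> T1 \<and> {b, w} \<notin> T1"
proof (cases "2 \<le> k")
  case True
  obtain s where s: "s \<in> S" using S_nonempty by blast
  then have "s < n" "s \<notin> set p" using edge_lt S_disjoint_path by (auto simp: in_nbrs_iff)
  moreover have "s \<noteq> v" using \<open>s \<notin> set p\<close> nth_p_in_set[of k] by auto
  moreover have "{v, s} \<notin> T1" "{w, s} \<notin> T1"
    using shift_adjacent_off_path_iff[of k s] shift_adjacent_off_path_iff[of "k - 1" s]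
      \<open>s \<notin> set p\<close> True by auto
  ultimately show ?thesis by (auto simp: insert_commute)
next
  case False
  then have k1: "k = 1" using k_pos by simp
  have "0 < n" using nth_p_lt[of 0] by simp
  moreover have "{u, v} \<in> T" using path_adjacent_iff[of 0 1] k1 by simp
  ultimately obtain z where z: "z < n" "z \<noteq> u" "z \<noteq> v" "{u, z} \<notin> T" "{v, z} \<notin> T"
    using edge_has_common_non_neighbour_if_diam_ge_4[OF _ diam] by blast
  have "z \<notin> set p"
  proof
    assume "z \<in> set p"
    then obtain a where "a \<le> 1" "z = p ! a" using in_set_p_iff k1 by auto
    then show False using z(2,3) k1 by (cases a) auto
  qed
  then have "{v, z} \<notin> T1" "{u, z} \<notin> T1"
    using shift_adjacent_off_path_iff[of k z] shift_adjacent_off_path_iff[of 0 z] z k1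
    by (auto simp: in_nbrs_iff)
  then show ?thesis using z k1 by (auto simp: insert_commute)
qed

lemma complement_shift_walk_exists:
  assumes diam: "4 \<le> diam n T" and i: "i < n" and j: "j < n"
  shows "\<exists>xs. walk (complement n T1) xs \<and> hd xs = i \<and> last xs = j"
proof -
  obtain b where b: "b < n" "b \<noteq> v" "{v, b} \<notin> T1" "{b, w} \<notin> T1"
    using shift_far_vertex_exists[OF diam] by blast
  show ?thesis
  proof (rule complement_walk_exists[OF nth_p_lt[OF order_refl] b(1) b(2)[symmetric] b(3) _ i j])
    fix z assume "z \<noteq> v" "z \<noteq> b"
    show "{v, z} \<notin> T1 \<or> {b, z} \<notin> T1" using v_pendant_in_shift b(4) by blast
  qed
qed

theorem dist_spectral_radius_complement_shift_less:
  assumes diam: "4 \<le> diam n T"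
  shows "dist_spectral_radius n (complement n T) < dist_spectral_radius n (complement n T1)"
proof -
  have n: "0 < n" using nth_p_lt[of 0] by simp
  have u: "u < n" and v: "v < n" using nth_p_lt[of 0] nth_p_lt[of k] by simp_all
  have S: "S \<subseteq> {..<n}" "u \<notin> S" "v \<notin> S" and R: "R \<subseteq> {..<n}" "u \<notin> R" "v \<notin> R"
    using edge_lt nth_p_notin_S[of 0] nth_p_notin_S[of k] nth_p_notin_R[of 0] nth_p_notin_R[of k]
    by (auto simp: in_nbrs_iff)
  have shift_S: "diam2_compl_dist T1 i j = diam2_compl_dist T i j + star_adj u S i j - star_adj v S i j"
    for i j using u_neq_v S S_not_adjacent_u by (intro diam2_compl_dist_shift_edges) (auto simp: in_nbrs_iff)
  have shift_R: "diam2_compl_dist T1' i j = diam2_compl_dist T i j + star_adj v R i j - star_adj u R i j"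
    for i j using u_neq_v R R_not_adjacent_v by (intro diam2_compl_dist_shift_edges) (auto simp: in_nbrs_iff)
  have T1_le: "diam2_compl_dist T1 i j \<le> real (gdist (complement n T1) i j)" if "i < n" "j < n" for i j
    using complement_shift_walk_exists[OF diam that] diam2_compl_dist_le_gdist_complement by blast
  have "dist_spectral_radius n (complement n T) = max_eigenvalue n (diam2_compl_dist T)"
    unfolding dist_spectral_radius_eq_max_eigenvalue
    by (intro max_eigenvalue_cong gdist_complement_eq_diam2_compl_dist
        edge_has_common_non_neighbour_if_diam_ge_4[OF n diam])
  also have "\<dots> < max_eigenvalue n (\<lambda>i j. real (gdist (complement n T1) i j))"
  proof (rule max_eigenvalue_less_by_star_shift[OF symmetric_on_diam2_compl_dist symmetric_on_gdist
        _ _ u v u_neq_v S_nonempty S R_nonempty R])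
    show "reversal i < n" "reversal (reversal i) = i" if "i < n" for i
      using that by (simp_all add: reversal_lt reversal_reversal)
    show "diam2_compl_dist T i j + star_adj u S i j - star_adj v S i j
        \<le> real (gdist (complement n T1) i j)" if "i < n" "j < n" for i j
      unfolding shift_S[symmetric] by (rule T1_le[OF that])
    show "diam2_compl_dist T i j + star_adj v R i j - star_adj u R i j
        \<le> real (gdist (complement n T1) (reversal i) (reversal j))" if "i < n" "j < n" for i j
      unfolding shift_R[symmetric] diam2_compl_dist_reversal[symmetric]
      by (rule T1_le[OF reversal_lt[OF that(1)] reversal_lt[OF that(2)]])
  qed (auto simp: diam2_compl_dist_def)
  also have "\<dots> = dist_spectral_radius n (complement n T1)"
    by (simp add: dist_spectral_radius_eq_max_eigenvalue)
  finally show ?thesis .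
qed

end

lemma proper_gts_obtains_path:
  assumes tree: "is_tree n T" and shift: "proper_gts n T u v T1"
  obtains p where "gts_path n T p" "p ! 0 = u" "p ! (length p - 1) = v"
    "T1 = shift_edges T v u (nbrs T v - {p ! (length p - 1 - 1)})"
proof -
  obtain p where p: "path T p" "hd p = u" "last p = v"
    and interior: "\<forall>i. 0 < i \<and> i < length p - 1 \<longrightarrow> deg T (p ! i) = 2"
    and T1: "T1 = shift_edges T v u (nbrs T v - {p ! (length p - 2)})"
    and uv: "u \<noteq> v" and not_pendant: "\<not> pendant T u" "\<not> pendant T v"
    using shift unfolding proper_gts_def gts_def Let_def shift_edges_def by blast
  have "p \<noteq> []" using p(1) by (simp add: path_def walk_def)
  then have ends: "p ! 0 = u" "p ! (length p - 1) = v"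
    using p(2,3) by (simp_all add: hd_conv_nth last_conv_nth)
  have "2 \<le> length p"
  proof (rule ccontr)
    assume "\<not> 2 \<le> length p"
    moreover have "0 < length p" using \<open>p \<noteq> []\<close> by simp
    ultimately have "length p = 1" by linarith
    then show False using ends uv by simp
  qed
  then have "gts_path n T p"
    using tree p(1) interior not_pendant ends unfolding is_tree_def by unfold_locales auto
  moreover have "length p - 2 = length p - 1 - 1" by simp
  ultimately show ?thesis using that ends T1 by simp
qed

theorem mainTheorem1:
  fixes n :: nat and T T1 :: "nat set set" and u v :: nat
  assumes "is_tree n T"
    and "diam n T \<ge> 4"
    and "proper_gts n T u v T1"
  shows "dist_spectral_radius n (complement n T1) > dist_spectral_radius n (complement n T)"
proof -
  obtain p where p: "gts_path n T p" and "p ! 0 = u" "p ! (length p - 1) = v"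
    and T1: "T1 = shift_edges T v u (nbrs T v - {p ! (length p - 1 - 1)})"
    using proper_gts_obtains_path[OF assms(1,3)] by blast
  then show ?thesis
    using gts_path.dist_spectral_radius_complement_shift_less[OF p assms(2)] by simp
qed

end
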